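(* Let $n\ge1$ and $p$ a prime. The radical $\mathcal{R}(n,p)$ of the $p$-modular descent algebra $\Sigma(n,p)$ is contained in the kernel of the homomorphism $\phi:\Sigma(n,p)\to G(n,p)$.
   Context: A composition of $n$ is a sequence of positive integers with sum $n$. The descent algebra $\Sigma_n$ has basis $\{B_q\}$ indexed by compositions of $n$ with multiplication $B_qB_r=\sum_{Z\in S(q,r)}B_{c(Z)}$, where for $q=[a_1,\dots,a_s]$, $r=[b_1,\dots,b_t]$, $S(q,r)$ is the set of $s\times t$ non-negative integer matrices with row sums $a_i$ and column sums $b_j$, and $c(Z)$ is the composition obtained by reading the entries of $Z$ row by row and omitting zeros. Let $\mathcal{Z}_n$ be the subring of integral combinations of the $B_q$ and $\Sigma(n,p)=\mathcal{Z}_n/p\mathcal{Z}_n$, an $\mathbb{F}_p$-algebra with basis $\overline{B}_q$ (images of $B_q$); $\mathcal{R}(n,p)$ denotes its (Jacobson) radical. For a composition $q=[a_1,\dots,a_r]$ let $\chi_q$ be the permutation character of $S_n$ induced from the trivial character of the Young subgroup $S_{a_1}\times\cdots\times S_{a_r}$, let $G_n$ be the ring (under pointwise operations) of integral combinations of the $\chi_q$, and let $G(n,p)$ be the $\mathbb{F}_p$-algebra obtained by reducing all character values of elements of $G_n$ modulo $p$; write $\tilde\chi_q$ for the reduction of $\chi_q$. The map $\phi:\Sigma(n,p)\to G(n,p)$ is the $\mathbb{F}_p$-linear map with $\phi(\overline{B}_q)=\tilde\chi_q$ for all compositions $q$; it is a surjective homomorphism of $\mathbb{F}_p$-algebras (as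 a consequence of Solomon's theorem that $B_q\mapsto\chi_q$ defines a ring homomorphism $\mathcal{Z}_n\to G_n$). *)

theory Defs
  imports Main "HOL-Library.FuncSet" "HOL-Combinatorics.Permutations" "HOL-Computational_Algebra.Primes"
begin

definition compositions :: "nat \<Rightarrow> nat list set" where
  "compositions n = {q. 0 \<notin> set q \<and> sum_list q = n}"

definition Smat :: "nat list \<Rightarrow> nat list \<Rightarrow> nat list list set" where
  "Smat q r = {Z. length Z = length q
      \<and> (\<forall>i < length q. length (Z ! i) = length r \<and> sum_list (Z ! i) = q ! i)
      \<and> (\<forall>j < length r. (\<Sum>i<length q. Z ! i ! j) = r ! j)}"

definition cZ :: "nat list list \<Rightarrow> nat list" where
  "cZ Z = filter (\<lambda>a. a \<noteq> 0) (concat Z)"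

text \<open>Sigma(n,p), realised over a field 'k with p elements: elements are
  coefficient functions on compositions of n (zero elsewhere), the coefficient of
  q being the coefficient of the basis element B_q.\<close>
definition desc_carrier :: "nat \<Rightarrow> (nat list \<Rightarrow> 'k::field) set" where
  "desc_carrier n = {x. \<forall>q. q \<notin> compositions n \<longrightarrow> x q = 0}"

text \<open>Bilinear extension of B_q B_r = sum over Z in S(q,r) of B_{c(Z)}.\<close>
definition desc_mult :: "nat \<Rightarrow> (nat list \<Rightarrow> 'k::field) \<Rightarrow> (nat list \<Rightarrow> 'k) \<Rightarrow> (nat list \<Rightarrow> 'k)" where
  "desc_mult n x y = (\<lambda>s. \<Sum>q\<in>compositions n. \<Sum>r\<in>compositions n.
       x q * y r * of_nat (card {Z \<in> Smat q r. cZ Z = s}))"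

definition desc_left_ideal :: "nat \<Rightarrow> (nat list \<Rightarrow> 'k::field) set \<Rightarrow> bool" where
  "desc_left_ideal n I \<longleftrightarrow> I \<subseteq> desc_carrier n \<and> (\<lambda>q. 0) \<in> I
     \<and> (\<forall>a\<in>I. \<forall>b\<in>I. (\<lambda>q. a q + b q) \<in> I)
     \<and> (\<forall>c a. a \<in> I \<longrightarrow> (\<lambda>q. c * a q) \<in> I)
     \<and> (\<forall>y\<in>desc_carrier n. \<forall>a\<in>I. desc_mult n y a \<in> I)"

definition desc_maximal_left_ideal :: "nat \<Rightarrow> (nat list \<Rightarrow> 'k::field) set \<Rightarrow> bool" where
  "desc_maximal_left_ideal n I \<longleftrightarrow> desc_left_ideal n I \<and> I \<noteq> desc_carrier n
     \<and> (\<forall>J. desc_left_ideal n J \<and> I \<subseteq> J \<longrightarrow> J = I \<or> J = desc_carrier n)"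

definition desc_radical :: "nat \<Rightarrow> (nat list \<Rightarrow> 'k::field) set" where
  "desc_radical n = desc_carrier n \<inter> \<Inter> {I. desc_maximal_left_ideal n I}"

text \<open>Permutation character chi_q of S_n (acting on {0..<n}) induced from the trivial
  character of the Young subgroup: the number of cosets fixed by sigma, i.e. the number
  of ordered set partitions (maps f into {0..<length q} with fibre sizes q!i) that are
  sigma-invariant.\<close>
definition chi :: "nat \<Rightarrow> nat list \<Rightarrow> (nat \<Rightarrow> nat) \<Rightarrow> nat" where
  "chi n q \<sigma> = card {f \<in> {0..<n} \<rightarrow>\<^sub>E {0..<length q}.
      (\<forall>i < length q. card {k \<in> {0..<n}. f k = i} = q ! i)
      \<and> (\<forall>k < n. f (\<sigma> k) = f k)}"

definition desc_phi :: "nat \<Rightarrow> (nat list \<Rightarrow> 'k::field) \<Rightarrow> (nat \<Rightarrow> nat) \<Rightarrow> 'k" where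
  "desc_phi n x \<sigma> = (\<Sum>q\<in>compositions n. x q * of_nat (chi n q \<sigma>))"

end

theory Submission
  imports Defs
begin

text \<open>For a fixed permutation \<sigma>, the value chi q \<sigma> counts the \<sigma>-invariant ordered set
  partitions of shape q. A pair of such partitions of shapes q and r is the same as a
  \<sigma>-invariant partition indexed by the cells of its intersection matrix Z \<in> S(q,r), and
  dropping the empty cells turns it into a partition of shape c(Z). This is Solomon's
  formula chi q \<sigma> * chi r \<sigma> = \<Sum>Z. chi (c Z) \<sigma>, so x \<mapsto> \<phi>(x)(\<sigma>) is an algebra homomorphism
  from \<Sigma>(n,p) to the field. If it is nonzero, its kernel has codimension one and hence is a
  maximal left ideal, which contains the radical. Neither n \<ge> 1 nor the characteristic
  of the field plays a role.\<close>

definition invariant_colourings ::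
    "nat set \<Rightarrow> (nat \<Rightarrow> nat) \<Rightarrow> 'i set \<Rightarrow> ('i \<Rightarrow> nat) \<Rightarrow> (nat \<Rightarrow> 'i) set" where
  "invariant_colourings A \<sigma> I w = {h \<in> A \<rightarrow>\<^sub>E I.
      (\<forall>i\<in>I. card {k\<in>A. h k = i} = w i) \<and> (\<forall>k\<in>A. h (\<sigma> k) = h k)}"

lemma chi_eq_card_invariant_colourings:
  "chi n q \<sigma> = card (invariant_colourings {0..<n} \<sigma> {0..<length q} ((!) q))"
  unfolding chi_def invariant_colourings_def by (rule arg_cong[where f = card]) auto

lemma finite_invariant_colourings:
  "finite A \<Longrightarrow> finite I \<Longrightarrow> finite (invariant_colourings A \<sigma> I w)"
  unfolding invariant_colourings_def by (rule finite_subset[OF _ finite_PiE]) auto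

lemma card_invariant_colourings_le_relabel:
  assumes A: "finite A" and J: "finite J" and \<sigma>: "\<forall>k\<in>A. \<sigma> k \<in> A" and e: "bij_betw e I J"
    and w: "\<forall>i\<in>I. w i = w' (e i)"
  shows "card (invariant_colourings A \<sigma> I w) \<le> card (invariant_colourings A \<sigma> J w')"
proof -
  let ?F = "\<lambda>h. restrict (e \<circ> h) A"
  have "inj_on ?F (invariant_colourings A \<sigma> I w)"
  proof (rule inj_onI, rule ext)
    fix h1 h2 k
    assume h: "h1 \<in> invariant_colourings A \<sigma> I w" "h2 \<in> invariant_colourings A \<sigma> I w"
      and eq: "?F h1 = ?F h2"
    show "h1 k = h2 k"
    proof (cases "k \<in> A")
      case True
      then have "e (h1 k) = e (h2 k)" "h1 k \<in> I" "h2 k \<in> I"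
        using fun_cong[OF eq, of k] h by (auto simp: invariant_colourings_def)
      then show ?thesis using e by (auto simp: bij_betw_def inj_on_def)
    qed (use h in \<open>auto simp: invariant_colourings_def PiE_def extensional_def\<close>)
  qed
  moreover have "?F ` invariant_colourings A \<sigma> I w \<subseteq> invariant_colourings A \<sigma> J w'"
  proof clarify
    fix h assume h: "h \<in> invariant_colourings A \<sigma> I w"
    then have hI: "\<forall>k\<in>A. h k \<in> I" by (auto simp: invariant_colourings_def)
    have "card {k\<in>A. ?F h k = j} = w' j" if "j \<in> J" for j
    proof -
      obtain i where i: "i \<in> I" "j = e i" using \<open>j \<in> J\<close> e by (auto simp: bij_betw_def)
      then have "{k\<in>A. ?F h k = j} = {k\<in>A. h k = i}"
        using hI e by (auto simp: bij_betw_def inj_on_def)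
      then show ?thesis using h i w by (auto simp: invariant_colourings_def)
    qed
    with h hI e \<sigma> show "?F h \<in> invariant_colourings A \<sigma> J w'"
      by (auto simp: invariant_colourings_def bij_betw_def)
  qed
  ultimately show ?thesis by (rule card_inj_on_le[OF _ _ finite_invariant_colourings[OF A J]])
qed

lemma card_invariant_colourings_relabel:
  assumes "finite A" "finite I" "finite J" "\<forall>k\<in>A. \<sigma> k \<in> A" "bij_betw e I J"
    "\<forall>i\<in>I. w i = w' (e i)"
  shows "card (invariant_colourings A \<sigma> I w) = card (invariant_colourings A \<sigma> J w')"
proof (rule antisym)
  show "card (invariant_colourings A \<sigma> I w) \<le> card (invariant_colourings A \<sigma> J w')"
    using card_invariant_colourings_le_relabel assms by blast
  have "\<forall>j\<in>J. w' j = w (inv_into I e j)"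
    using assms(5,6) by (auto simp: bij_betw_def f_inv_into_f inv_into_into)
  then show "card (invariant_colourings A \<sigma> J w') \<le> card (invariant_colourings A \<sigma> I w)"
    using card_invariant_colourings_le_relabel[OF assms(1,2,4) bij_betw_inv_into[OF assms(5)]]
    by blast
qed

lemma invariant_colourings_nonzero_weights:
  assumes "finite A"
  shows "invariant_colourings A \<sigma> I w = invariant_colourings A \<sigma> {i\<in>I. w i \<noteq> 0} w"
proof (intro equalityI subsetI)
  fix h assume h: "h \<in> invariant_colourings A \<sigma> I w"
  have "w (h k) \<noteq> 0" if "k \<in> A" for k
  proof -
    have "card {k'\<in>A. h k' = h k} \<noteq> 0" using \<open>finite A\<close> \<open>k \<in> A\<close> by (auto simp: card_eq_0_iff)
    moreover have "h k \<in> I" using h \<open>k \<in> A\<close> by (auto simp: invariant_colourings_def)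
    ultimately show ?thesis using h by (auto simp: invariant_colourings_def)
  qed
  with h show "h \<in> invariant_colourings A \<sigma> {i\<in>I. w i \<noteq> 0} w"
    by (auto simp: invariant_colourings_def)
next
  fix h assume h: "h \<in> invariant_colourings A \<sigma> {i\<in>I. w i \<noteq> 0} w"
  then have "card {k\<in>A. h k = i} = w i" if "i \<in> I" for i
  proof (cases "w i = 0")
    case True
    then have "{k\<in>A. h k = i} = {}" using h by (force simp: invariant_colourings_def PiE_iff)
    then show ?thesis using True by (metis card.empty)
  qed (use that in \<open>auto simp: invariant_colourings_def\<close>)
  with h show "h \<in> invariant_colourings A \<sigma> I w"
    by (auto simp: invariant_colourings_def)
qed

definition invariant_colouring_pairs ::
    "nat set \<Rightarrow> (nat \<Rightarrow> nat) \<Rightarrow> 'i set \<Rightarrow> 'j set \<Rightarrow> ('i \<Rightarrow> nat) \<Rightarrow> ('j \<Rightarrow> nat)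
      \<Rightarrow> (nat \<Rightarrow> 'i \<times> 'j) set" where
  "invariant_colouring_pairs A \<sigma> I J u v = {h \<in> A \<rightarrow>\<^sub>E I \<times> J. (\<forall>k\<in>A. h (\<sigma> k) = h k)
      \<and> (\<forall>i\<in>I. card {k\<in>A. fst (h k) = i} = u i) \<and> (\<forall>j\<in>J. card {k\<in>A. snd (h k) = j} = v j)}"

lemma card_invariant_colourings_mult:
  assumes "\<forall>k\<in>A. \<sigma> k \<in> A"
  shows "card (invariant_colourings A \<sigma> I u) * card (invariant_colourings A \<sigma> J v)
       = card (invariant_colouring_pairs A \<sigma> I J u v)"
proof -
  have restrict_fibre: "{k. (k \<in> A \<longrightarrow> P k) \<and> k \<in> A} = {k\<in>A. P k}" for P by auto
  have "bij_betw (\<lambda>(f, g). restrict (\<lambda>k. (f k, g k)) A)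
      (invariant_colourings A \<sigma> I u \<times> invariant_colourings A \<sigma> J v)
      (invariant_colouring_pairs A \<sigma> I J u v)"
    by (rule bij_betw_byWitness[where f' = "\<lambda>h. (restrict (fst \<circ> h) A, restrict (snd \<circ> h) A)"])
       (use assms in \<open>auto simp: invariant_colourings_def invariant_colouring_pairs_def PiE_iff
          extensional_def fun_eq_iff restrict_fibre\<close>)
  from bij_betw_same_card[OF this] show ?thesis by (simp only: card_cartesian_product)
qed

lemma card_fibre_fst_eq_sum:
  assumes "finite A" "finite J" "\<forall>k\<in>A. h k \<in> I \<times> J"
  shows "card {k\<in>A. fst (h k) = i} = (\<Sum>j\<in>J. card {k\<in>A. h k = (i, j)})"
proof -
  have "{k\<in>A. fst (h k) = i} = (\<Union>j\<in>J. {k\<in>A. h k = (i, j)})" using assms(3) by force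
  then show ?thesis using assms(1,2) by (auto intro: card_UN_disjoint)
qed

lemma card_fibre_snd_eq_sum:
  assumes "finite A" "finite I" "\<forall>k\<in>A. h k \<in> I \<times> J"
  shows "card {k\<in>A. snd (h k) = j} = (\<Sum>i\<in>I. card {k\<in>A. h k = (i, j)})"
proof -
  have "{k\<in>A. snd (h k) = j} = (\<Union>i\<in>I. {k\<in>A. h k = (i, j)})" using assms(3) by force
  then show ?thesis using assms(1,2) by (auto intro: card_UN_disjoint)
qed

section \<open>Solomon's formula for the permutation characters\<close>

lemma Smat_eq_map_entries:
  "Z \<in> Smat q r \<Longrightarrow> Z = map (\<lambda>i. map (\<lambda>j. Z ! i ! j) [0..<length r]) [0..<length q]"
  unfolding Smat_def by (auto intro!: nth_equalityI)

lemma Smat_eqI: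
  assumes "Z1 \<in> Smat q r" "Z2 \<in> Smat q r"
    and "\<And>i j. i < length q \<Longrightarrow> j < length r \<Longrightarrow> Z1 ! i ! j = Z2 ! i ! j"
  shows "Z1 = Z2"
  by (subst Smat_eq_map_entries[OF assms(1)], subst Smat_eq_map_entries[OF assms(2)])
     (simp add: assms(3))

definition fibre_matrix :: "nat set \<Rightarrow> (nat \<Rightarrow> nat \<times> nat) \<Rightarrow> nat \<Rightarrow> nat \<Rightarrow> nat list list" where
  "fibre_matrix A h s t = map (\<lambda>i. map (\<lambda>j. card {k\<in>A. h k = (i, j)}) [0..<t]) [0..<s]"

lemma fibre_matrix_in_Smat:
  assumes A: "finite A"
    and h: "h \<in> invariant_colouring_pairs A \<sigma> {0..<length q} {0..<length r} ((!) q) ((!) r)"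
  shows "fibre_matrix A h (length q) (length r) \<in> Smat q r"
proof -
  let ?Z = "fibre_matrix A h (length q) (length r)"
  have hIJ: "\<forall>k\<in>A. h k \<in> {0..<length q} \<times> {0..<length r}"
    using h by (auto simp: invariant_colouring_pairs_def)
  have "sum_list (?Z ! i) = q ! i" if i: "i < length q" for i
  proof -
    have "sum_list (?Z ! i) = card {k\<in>A. fst (h k) = i}"
      using i card_fibre_fst_eq_sum[OF A _ hIJ]
      by (simp add: fibre_matrix_def interv_sum_list_conv_sum_set_nat)
    then show ?thesis using h i by (auto simp: invariant_colouring_pairs_def)
  qed
  moreover have "(\<Sum>i<length q. ?Z ! i ! j) = r ! j" if j: "j < length r" for j
  proof -
    have "(\<Sum>i<length q. ?Z ! i ! j) = card {k\<in>A. snd (h k) = j}"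
      using j card_fibre_snd_eq_sum[OF A _ hIJ]
      by (auto simp: fibre_matrix_def atLeast0LessThan intro!: sum.cong)
    then show ?thesis using h j by (auto simp: invariant_colouring_pairs_def)
  qed
  ultimately show ?thesis by (simp add: Smat_def fibre_matrix_def)
qed

lemma invariant_colouring_pairs_eq_UN_Smat:
  assumes A: "finite A"
  shows "invariant_colouring_pairs A \<sigma> {0..<length q} {0..<length r} ((!) q) ((!) r)
    = (\<Union>Z\<in>Smat q r. invariant_colourings A \<sigma> ({0..<length q} \<times> {0..<length r}) (\<lambda>(i, j). Z ! i ! j))"
    (is "?H = (\<Union>Z\<in>Smat q r. ?HZ Z)")
proof (intro equalityI subsetI)
  fix h assume h: "h \<in> ?H"
  then have "h \<in> ?HZ (fibre_matrix A h (length q) (length r))"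
    by (auto simp: invariant_colouring_pairs_def invariant_colourings_def fibre_matrix_def)
  with fibre_matrix_in_Smat[OF A h] show "h \<in> (\<Union>Z\<in>Smat q r. ?HZ Z)" by blast
next
  fix h assume "h \<in> (\<Union>Z\<in>Smat q r. ?HZ Z)"
  then obtain Z where Z: "Z \<in> Smat q r" and h: "h \<in> ?HZ Z" by blast
  have hIJ: "\<forall>k\<in>A. h k \<in> {0..<length q} \<times> {0..<length r}"
    using h by (auto simp: invariant_colourings_def)
  have fibre: "card {k\<in>A. h k = (i, j)} = Z ! i ! j" if "i < length q" "j < length r" for i j
    using h that by (auto simp: invariant_colourings_def)
  have "card {k\<in>A. fst (h k) = i} = q ! i" if "i < length q" for i
    using card_fibre_fst_eq_sum[OF A _ hIJ] fibre that Z
    by (auto simp: Smat_def sum_list_sum_nth)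
  moreover have "card {k\<in>A. snd (h k) = j} = r ! j" if "j < length r" for j
    using card_fibre_snd_eq_sum[OF A _ hIJ] fibre that Z
    by (simp add: Smat_def atLeast0LessThan)
  ultimately show "h \<in> ?H"
    using h by (auto simp: invariant_colourings_def invariant_colouring_pairs_def)
qed

lemma card_invariant_colourings_Smat_eq_cZ:
  assumes Z: "Z \<in> Smat q r" and A: "finite A" and \<sigma>: "\<forall>k\<in>A. \<sigma> k \<in> A"
  shows "card (invariant_colourings A \<sigma> ({0..<length q} \<times> {0..<length r}) (\<lambda>(i, j). Z ! i ! j))
       = card (invariant_colourings A \<sigma> {0..<length (cZ Z)} ((!) (cZ Z)))"
proof -
  let ?w = "\<lambda>(i, j). Z ! i ! j"
  let ?cells = "filter (\<lambda>c. ?w c \<noteq> 0) (List.product [0..<length q] [0..<length r])"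
  have "concat Z = map ?w (List.product [0..<length q] [0..<length r])"
    by (subst Smat_eq_map_entries[OF Z]) (simp add: product_concat_map map_concat comp_def)
  then have cZ: "cZ Z = map ?w ?cells"
    by (simp add: cZ_def filter_map comp_def)
  have "set ?cells = {c \<in> {0..<length q} \<times> {0..<length r}. ?w c \<noteq> 0}" by auto
  then have bij: "bij_betw ((!) ?cells) {0..<length (cZ Z)}
      {c \<in> {0..<length q} \<times> {0..<length r}. ?w c \<noteq> 0}"
    using cZ by (intro bij_betw_nth) (simp_all add: distinct_product atLeast0LessThan)
  have "\<forall>i\<in>{0..<length (cZ Z)}. cZ Z ! i = ?w (?cells ! i)" using cZ by simp
  then have "card (invariant_colourings A \<sigma> {0..<length (cZ Z)} ((!) (cZ Z)))
      = card (invariant_colourings A \<sigma> {c \<in> {0..<length q} \<times> {0..<length r}. ?w c \<noteq> 0} ?w)"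
    by (intro card_invariant_colourings_relabel[OF A _ _ \<sigma> bij]) simp_all
  then show ?thesis by (metis invariant_colourings_nonzero_weights[OF A])
qed

lemma Smat_finite: "finite (Smat q r)"
proof -
  let ?rows = "{row. set row \<subseteq> {0..sum_list q} \<and> length row \<le> length r}"
  have "Smat q r \<subseteq> {Z. set Z \<subseteq> ?rows \<and> length Z \<le> length q}"
  proof clarify
    fix Z assume Z: "Z \<in> Smat q r"
    have "row \<in> ?rows" if "row \<in> set Z" for row
    proof -
      obtain i where i: "i < length q" "row = Z ! i"
        using Z \<open>row \<in> set Z\<close> by (auto simp: Smat_def in_set_conv_nth)
      have "x \<le> sum_list q" if "x \<in> set row" for x
      proof -
        have "x \<le> sum_list row" using that by (rule member_le_sum_list) simp
        also have "\<dots> = q ! i" using Z i by (simp add: Smat_def)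
        also have "\<dots> \<le> sum_list q" using i(1) by (rule elem_le_sum_list)
        finally show ?thesis .
      qed
      then show ?thesis using Z i by (auto simp: Smat_def)
    qed
    then show "set Z \<subseteq> ?rows \<and> length Z \<le> length q" using Z by (auto simp: Smat_def)
  qed
  moreover have "finite {Z. set Z \<subseteq> ?rows \<and> length Z \<le> length q}"
    by (intro finite_lists_length_le) (simp add: finite_lists_length_le)
  ultimately show ?thesis by (rule finite_subset)
qed

theorem chi_mult_eq_sum_Smat:
  assumes "\<sigma> permutes {0..<n}"
  shows "chi n q \<sigma> * chi n r \<sigma> = (\<Sum>Z\<in>Smat q r. chi n (cZ Z) \<sigma>)"
proof -
  let ?A = "{0..<n}" and ?I = "{0..<length q}" and ?J = "{0..<length r}"
  let ?HZ = "\<lambda>Z. invariant_colourings ?A \<sigma> (?I \<times> ?J) (\<lambda>(i, j). Z ! i ! j)"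
  have \<sigma>: "\<forall>k\<in>?A. \<sigma> k \<in> ?A" using permutes_in_image[OF assms] by auto
  have disjoint: "?HZ Z1 \<inter> ?HZ Z2 = {}"
    if "Z1 \<in> Smat q r" "Z2 \<in> Smat q r" "Z1 \<noteq> Z2" for Z1 Z2
  proof (rule ccontr)
    assume "?HZ Z1 \<inter> ?HZ Z2 \<noteq> {}"
    then obtain h where "h \<in> ?HZ Z1" "h \<in> ?HZ Z2" by blast
    then have "Z1 = Z2"
      by (intro Smat_eqI[OF that(1,2)]) (auto simp: invariant_colourings_def)
    with that(3) show False ..
  qed
  have "chi n q \<sigma> * chi n r \<sigma> = card (invariant_colouring_pairs ?A \<sigma> ?I ?J ((!) q) ((!) r))"
    unfolding chi_eq_card_invariant_colourings by (rule card_invariant_colourings_mult[OF \<sigma>])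
  also have "\<dots> = (\<Sum>Z\<in>Smat q r. card (?HZ Z))"
    unfolding invariant_colouring_pairs_eq_UN_Smat[OF finite_atLeastLessThan]
    using Smat_finite disjoint by (intro card_UN_disjoint) (auto intro: finite_invariant_colourings)
  also have "\<dots> = (\<Sum>Z\<in>Smat q r. chi n (cZ Z) \<sigma>)"
    by (intro sum.cong refl)
       (simp add: card_invariant_colourings_Smat_eq_cZ[OF _ _ \<sigma>] chi_eq_card_invariant_colourings)
  finally show ?thesis .
qed

lemma length_le_sum_list_nonzero: "0 \<notin> set xs \<Longrightarrow> length xs \<le> sum_list (xs :: nat list)"
  by (induction xs) auto

lemma finite_compositions: "finite (compositions n)"
proof (rule finite_subset)
  show "compositions n \<subseteq> {xs. set xs \<subseteq> {0..n} \<and> length xs \<le> n}"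
    using length_le_sum_list_nonzero member_le_sum_list
    by (fastforce simp: compositions_def)
qed (simp add: finite_lists_length_le)

lemma sum_list_concat: "sum_list (concat xss) = sum_list (map sum_list xss)"
  by (induction xss) auto

lemma sum_list_filter_nonzero: "sum_list (filter (\<lambda>a. a \<noteq> 0) xs) = sum_list xs"
  by (induction xs) auto

lemma cZ_in_compositions:
  assumes "Z \<in> Smat q r" and "q \<in> compositions n"
  shows "cZ Z \<in> compositions n"
proof -
  have "map sum_list Z = q" using assms(1) by (auto simp: Smat_def intro!: nth_equalityI)
  then have "sum_list (cZ Z) = sum_list q"
    by (simp only: cZ_def sum_list_filter_nonzero sum_list_concat)
  then show ?thesis using assms(2) by (simp add: compositions_def cZ_def)
qed

lemma sum_Smat_card_cZ_chi:
  assumes q: "q \<in> compositions n" and \<sigma>: "\<sigma> permutes {0..<n}"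
  shows "(\<Sum>s\<in>compositions n. of_nat (card {Z\<in>Smat q r. cZ Z = s}) * of_nat (chi n s \<sigma>))
         = (of_nat (chi n q \<sigma> * chi n r \<sigma>) :: 'k::semiring_1)"
proof -
  have "(\<Sum>s\<in>compositions n. card {Z\<in>Smat q r. cZ Z = s} * chi n s \<sigma>)
      = (\<Sum>s\<in>compositions n. \<Sum>Z\<in>{Z\<in>Smat q r. cZ Z = s}. chi n (cZ Z) \<sigma>)"
    by (intro sum.cong) auto
  also have "\<dots> = (\<Sum>Z\<in>Smat q r. chi n (cZ Z) \<sigma>)"
    using Smat_finite finite_compositions cZ_in_compositions[OF _ q] by (intro sum.group) auto
  also have "\<dots> = chi n q \<sigma> * chi n r \<sigma>" using chi_mult_eq_sum_Smat[OF \<sigma>] by simp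
  finally show ?thesis by (metis (mono_tags, lifting) of_nat_mult of_nat_sum sum.cong)
qed

lemma desc_phi_mult:
  assumes \<sigma>: "\<sigma> permutes {0..<n}"
  shows "desc_phi n (desc_mult n y a) \<sigma> = desc_phi n y \<sigma> * desc_phi n (a :: nat list \<Rightarrow> 'k::field) \<sigma>"
proof -
  let ?C = "compositions n"
  let ?c = "\<lambda>q r s. of_nat (card {Z\<in>Smat q r. cZ Z = s}) * (of_nat (chi n s \<sigma>) :: 'k)"
  have "desc_phi n (desc_mult n y a) \<sigma> = (\<Sum>s\<in>?C. \<Sum>q\<in>?C. \<Sum>r\<in>?C. y q * a r * ?c q r s)"
    by (simp add: desc_phi_def desc_mult_def sum_distrib_right mult.assoc)
  also have "\<dots> = (\<Sum>q\<in>?C. \<Sum>r\<in>?C. \<Sum>s\<in>?C. y q * a r * ?c q r s)"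
    by (subst sum.swap) (intro sum.cong refl sum.swap)
  also have "\<dots> = (\<Sum>q\<in>?C. \<Sum>r\<in>?C. y q * a r * of_nat (chi n q \<sigma> * chi n r \<sigma>))"
    by (simp add: sum_distrib_left[symmetric] sum_Smat_card_cZ_chi[OF _ \<sigma>])
  also have "\<dots> = desc_phi n y \<sigma> * desc_phi n a \<sigma>"
    unfolding desc_phi_def sum_product by (intro sum.cong refl) (simp add: mult_ac)
  finally show ?thesis .
qed

lemma desc_phi_add: "desc_phi n (\<lambda>q. a q + b q) \<sigma> = desc_phi n a \<sigma> + desc_phi n b \<sigma>"
  by (simp add: desc_phi_def distrib_right sum.distrib)

lemma desc_phi_scale: "desc_phi n (\<lambda>q. c * a q) \<sigma> = c * desc_phi n a \<sigma>"
  by (simp add: desc_phi_def sum_distrib_left mult.assoc)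

lemma desc_mult_in_carrier: "desc_mult n y (a :: nat list \<Rightarrow> 'k::field) \<in> desc_carrier n"
proof -
  have "card {Z\<in>Smat q r. cZ Z = s} = 0" if "q \<in> compositions n" "s \<notin> compositions n" for q r s
    using cZ_in_compositions that by (metis (mono_tags, lifting) card.empty empty_Collect_eq)
  then show ?thesis by (simp add: desc_carrier_def desc_mult_def)
qed

section \<open>Kernels of characters are maximal left ideals\<close>

lemma desc_left_ideal_phi_kernel:
  assumes "\<sigma> permutes {0..<n}"
  shows "desc_left_ideal n {a \<in> desc_carrier n. desc_phi n a \<sigma> = (0 :: 'k::field)}"
  by (auto simp: desc_left_ideal_def desc_phi_add desc_phi_scale desc_phi_mult[OF assms]
      desc_mult_in_carrier) (auto simp: desc_carrier_def desc_phi_def)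

lemma desc_left_ideal_eq_carrier:
  assumes J: "desc_left_ideal n J"
    and kernel: "{a \<in> desc_carrier n. desc_phi n a \<sigma> = 0} \<subseteq> J"
    and b: "b \<in> J" "desc_phi n b \<sigma> \<noteq> (0 :: 'k::field)"
  shows "J = desc_carrier n"
proof
  show "J \<subseteq> desc_carrier n" using J by (simp add: desc_left_ideal_def)
  show "desc_carrier n \<subseteq> J"
  proof
    fix y :: "nat list \<Rightarrow> 'k" assume y: "y \<in> desc_carrier n"
    define c where "c = desc_phi n y \<sigma> / desc_phi n b \<sigma>"
    let ?y' = "\<lambda>q. y q + - c * b q"
    have "desc_phi n ?y' \<sigma> = desc_phi n y \<sigma> + - c * desc_phi n b \<sigma>"
      by (simp only: desc_phi_add desc_phi_scale)
    also have "\<dots> = 0" using b by (simp add: c_def)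
    finally have "desc_phi n ?y' \<sigma> = 0" .
    moreover have "b \<in> desc_carrier n" using J b by (auto simp: desc_left_ideal_def)
    then have "?y' \<in> desc_carrier n" using y by (simp add: desc_carrier_def)
    ultimately have "?y' \<in> J" using kernel by blast
    moreover have "(\<lambda>q. c * b q) \<in> J" using J b by (simp add: desc_left_ideal_def)
    moreover have "\<forall>a\<in>J. \<forall>b\<in>J. (\<lambda>q. a q + b q) \<in> J" using J by (simp add: desc_left_ideal_def)
    ultimately have "(\<lambda>q. ?y' q + c * b q) \<in> J" by (metis (no_types))
    then show "y \<in> J" by simp
  qed
qed

lemma desc_maximal_left_ideal_phi_kernel:
  assumes \<sigma>: "\<sigma> permutes {0..<n}"
    and a: "a \<in> desc_carrier n" "desc_phi n a \<sigma> \<noteq> (0 :: 'k::field)"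
  shows "desc_maximal_left_ideal n {a \<in> desc_carrier n. desc_phi n a \<sigma> = (0 :: 'k)}"
proof -
  let ?K = "{a \<in> desc_carrier n. desc_phi n a \<sigma> = (0 :: 'k)}"
  have "?K \<noteq> desc_carrier n" using a by auto
  moreover have "J = desc_carrier n" if "desc_left_ideal n J" "?K \<subseteq> J" "J \<noteq> ?K" for J
  proof -
    obtain b where "b \<in> J" "b \<notin> ?K" using \<open>?K \<subseteq> J\<close> \<open>J \<noteq> ?K\<close> by blast
    then have "desc_phi n b \<sigma> \<noteq> 0" using \<open>desc_left_ideal n J\<close> by (auto simp: desc_left_ideal_def)
    with that \<open>b \<in> J\<close> show ?thesis by (intro desc_left_ideal_eq_carrier)
  qed
  ultimately show ?thesis
    using desc_left_ideal_phi_kernel[OF \<sigma>] by (auto simp: desc_maximal_left_ideal_def)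
qed

theorem lemma2p2:
  fixes n p :: nat and x :: "nat list \<Rightarrow> 'k::{field,finite}"
  assumes "n \<ge> 1" and "prime p" and "card (UNIV :: 'k set) = p"
    and "x \<in> desc_radical n"
  shows "\<forall>\<sigma>. \<sigma> permutes {0..<n} \<longrightarrow> desc_phi n x \<sigma> = 0"
proof (intro allI impI)
  fix \<sigma> assume \<sigma>: "\<sigma> permutes {0..<n}"
  have x: "x \<in> desc_carrier n" using assms(4) by (simp add: desc_radical_def)
  show "desc_phi n x \<sigma> = 0"
  proof (cases "\<exists>a\<in>desc_carrier n. desc_phi n a \<sigma> \<noteq> (0 :: 'k)")
    case True
    then obtain a where "a \<in> desc_carrier n" "desc_phi n a \<sigma> \<noteq> (0 :: 'k)" by blast
    then have "desc_maximal_left_ideal n {a \<in> desc_carrier n. desc_phi n a \<sigma> = (0 :: 'k)}"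
      by (rule desc_maximal_left_ideal_phi_kernel[OF \<sigma>])
    then show ?thesis using assms(4) by (auto simp: desc_radical_def)
  qed (use x in blast)
qed

end
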